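(* Let $H$ be a finite simple graph on vertex set $\{x_1,\dots,x_n\}$ and $G=w(H)$, a graph on $2n$ vertices, and suppose $|E(G)|\ge n+1$. Let $\mathbb{K}$ be a field of characteristic $0$, let $A=A(G)$ be the Artinian algebra of $G$ over $\mathbb{K}$, and let $\ell=x_1+\dots+x_n+y_1+\dots+y_n$ be the sum of the variables. Then the multiplication map $\times\ell:A_i\to A_{i+1}$ has maximal rank (i.e. rank $\min\{\dim_{\mathbb{K}}A_i,\dim_{\mathbb{K}}A_{i+1}\}$) for every $i<n/2$ and for $i=n-1$; moreover for $i<n/2$ the map is injective.
   Context: For a graph $H$ with vertex set $\{x_1,\dots,x_n\}$, the whiskered graph $w(H)$ has vertex set $\{x_1,\dots,x_n,y_1,\dots,y_n\}$ and edge set $E(H)\cup\{\{x_i,y_i\}: i=1,\dots,n\}$. For a graph $G$ on vertices $z_1,\dots,z_m$, its Artinian algebra over $\mathbb{K}$ is $A(G)=\mathbb{K}[z_1,\dots,z_m]/(\langle z_1^2,\dots,z_m^2\rangle+I(G))$, where $I(G)=\langle z_iz_j:\{z_i,z_j\}\in E(G)\rangle$ is the edge ideal; it is standard graded, $A=\bigoplus_i A_i$. *)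

theory Defs
  imports Main "HOL.Vector_Spaces" "HOL-Library.Poly_Mapping"
begin

text \<open>Polynomials over a field 'k in commuting variables indexed by 'v are
  represented as finitely supported maps from monomials (exponent vectors
  'v to nat) to coefficients.\<close>

type_synonym ('v, 'k) mpoly = "('v \<Rightarrow>\<^sub>0 nat) \<Rightarrow>\<^sub>0 'k"

definition var :: "'v \<Rightarrow> ('v, 'k::comm_ring_1) mpoly" where
  "var v = Poly_Mapping.single (Poly_Mapping.single v 1) 1"

definition pscale :: "'k::comm_ring_1 \<Rightarrow> ('v, 'k) mpoly \<Rightarrow> ('v, 'k) mpoly" where
  "pscale c p = Poly_Mapping.single 0 c * p"

definition mdeg :: "('v \<Rightarrow>\<^sub>0 nat) \<Rightarrow> nat" where
  "mdeg m = (\<Sum>v\<in>Poly_Mapping.keys m. Poly_Mapping.lookup m v)"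

definition homog :: "nat \<Rightarrow> ('v, 'k::comm_ring_1) mpoly set" where
  "homog i = {p. \<forall>m\<in>Poly_Mapping.keys p. mdeg m = i}"

definition ideal_gen :: "('v, 'k::comm_ring_1) mpoly set \<Rightarrow> ('v, 'k) mpoly set" where
  "ideal_gen S = {p. \<exists>F c. finite F \<and> F \<subseteq> S \<and> p = (\<Sum>g\<in>F. c g * g)}"

text \<open>Edge ideal I(G) of a graph given by an edge relation, and the ideal
  \<langle>z_1^2,...,z_m^2\<rangle> + I(G) defining the Artinian algebra A(G) over the vertex
  set = all elements of the (finite) vertex type.\<close>
definition edge_ideal :: "('v \<Rightarrow> 'v \<Rightarrow> bool) \<Rightarrow> ('v, 'k::comm_ring_1) mpoly set" where
  "edge_ideal E = ideal_gen {var u * var v | u v. E u v}"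

definition artin_ideal :: "('v \<Rightarrow> 'v \<Rightarrow> bool) \<Rightarrow> ('v, 'k::comm_ring_1) mpoly set" where
  "artin_ideal E = ideal_gen ({var v * var v | v. True} \<union> {var u * var v | u v. E u v})"

text \<open>dim_K A(G)_i = dim_K (S_i / J_i) = dim S_i - dim (J \<inter> S_i), where S is the
  polynomial ring and J the defining ideal (all spaces finite dimensional).\<close>
definition artin_dim :: "('v::finite \<Rightarrow> 'v \<Rightarrow> bool) \<Rightarrow> nat \<Rightarrow> 'k::field itself \<Rightarrow> nat" where
  "artin_dim E i (_::'k itself) =
     vector_space.dim (pscale :: 'k \<Rightarrow> ('v,'k) mpoly \<Rightarrow> _) (homog i)
     - vector_space.dim (pscale :: 'k \<Rightarrow> ('v,'k) mpoly \<Rightarrow> _) (artin_ideal E \<inter> homog i)"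

text \<open>Rank of the map A_i \<rightarrow> A_(i+1), [p] \<mapsto> [f p]: the dimension of its image
  (f(S_i) + J_(i+1)) / J_(i+1).\<close>
definition artin_mult_rank ::
  "('v::finite \<Rightarrow> 'v \<Rightarrow> bool) \<Rightarrow> ('v,'k::field) mpoly \<Rightarrow> nat \<Rightarrow> nat" where
  "artin_mult_rank E f i =
     vector_space.dim (pscale :: 'k \<Rightarrow> ('v,'k) mpoly \<Rightarrow> _)
        ((\<lambda>p. f * p) ` homog i \<union> (artin_ideal E \<inter> homog (Suc i)))
     - vector_space.dim (pscale :: 'k \<Rightarrow> ('v,'k) mpoly \<Rightarrow> _) (artin_ideal E \<inter> homog (Suc i))"

definition artin_mult_injective ::
  "('v \<Rightarrow> 'v \<Rightarrow> bool) \<Rightarrow> ('v,'k::comm_ring_1) mpoly \<Rightarrow> nat \<Rightarrow> bool" where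
  "artin_mult_injective E f i = (\<forall>p\<in>homog i. f * p \<in> artin_ideal E \<longrightarrow> p \<in> artin_ideal E)"

text \<open>Whiskered graph w(H): vertices Inl x (the x_i) and Inr x (the y_i).\<close>
fun whisker :: "('a \<Rightarrow> 'a \<Rightarrow> bool) \<Rightarrow> 'a + 'a \<Rightarrow> 'a + 'a \<Rightarrow> bool" where
  "whisker E (Inl a) (Inl b) = E a b"
| "whisker E (Inl a) (Inr b) = (a = b)"
| "whisker E (Inr a) (Inl b) = (a = b)"
| "whisker E (Inr a) (Inr b) = False"

definition edges :: "('v \<Rightarrow> 'v \<Rightarrow> bool) \<Rightarrow> 'v set set" where
  "edges E = {{u, v} | u v. E u v}"

lemma vector_space_pscale: "vector_space (pscale :: 'k::field \<Rightarrow> ('v,'k) mpoly \<Rightarrow> _)"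
  unfolding vector_space_def pscale_def
  by (simp add: distrib_left distrib_right single_add mult.assoc[symmetric])
     (metis mult_single add_0 mult.assoc)

end

theory Submission
  imports Defs
begin

text \<open>The algebra \<open>A(G)\<close> has the squarefree monomials of the independent sets of \<open>G\<close> as a
  basis, and on their coefficients multiplication by \<open>\<ell>\<close> acts as the up operator \<open>U\<close> of the
  Boolean lattice, restricted to independent sets. In characteristic \<open>0\<close>, \<open>U\<close> is injective below
  the middle rank of a Boolean lattice: \<open>DU - UD = |N| - 2|S|\<close> forces every eigenvalue of \<open>DU\<close>
  there to be a positive integer. For \<open>G = w(H)\<close>, the independent sets with a fixed \<open>x\<close>-part \<open>X\<close>
  are \<open>X\<close> plus any set of \<open>y\<close>'s avoiding \<open>X\<close>, a Boolean lattice of rank \<open>n - |X|\<close>; looking at a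
  kernel element on such a lattice with \<open>|X|\<close> minimal transfers injectivity to \<open>A\<^sub>i \<rightarrow> A\<^sub>i\<^sub>+\<^sub>1\<close> for
  \<open>2i < n\<close>. In degree \<open>n\<close> the independent sets contain exactly one of \<open>x\<^sub>j, y\<^sub>j\<close> for each \<open>j\<close>; an
  edge of \<open>H\<close> forbids taking all the \<open>x\<close>'s, and exchanging some \<open>y\<^sub>j\<close> for \<open>x\<^sub>j\<close> shows by induction
  that all their monomials lie in the image of \<open>A\<^sub>n\<^sub>-\<^sub>1\<close>.\<close>

section \<open>Up and down operators on a Boolean lattice\<close>

definition up_op :: "('b set \<Rightarrow> 'k::comm_ring_1) \<Rightarrow> 'b set \<Rightarrow> 'k" where
  "up_op g T = (\<Sum>t\<in>T. g (T - {t}))"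

definition down_op :: "'b set \<Rightarrow> ('b set \<Rightarrow> 'k::comm_ring_1) \<Rightarrow> 'b set \<Rightarrow> 'k" where
  "down_op N h S = (\<Sum>t\<in>N - S. h (insert t S))"

lemma down_up_minus_up_down:
  fixes g :: "'b set \<Rightarrow> 'k::comm_ring_1"
  assumes N: "finite N" and S: "S \<subseteq> N"
  shows "down_op N (up_op g) S - up_op (down_op N g) S = (of_nat (card N) - 2 * of_nat (card S)) * g S"
proof -
  have fS: "finite S" using N S finite_subset by blast
  define X where "X = (\<Sum>t\<in>N - S. \<Sum>u\<in>S. g (insert t (S - {u})))"
  have DU: "down_op N (up_op g) S = of_nat (card (N - S)) * g S + X"
  proof -
    have "down_op N (up_op g) S = (\<Sum>t\<in>N - S. g S + (\<Sum>u\<in>S. g (insert t (S - {u}))))"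
      unfolding down_op_def up_op_def
    proof (rule sum.cong[OF refl])
      fix t assume t: "t \<in> N - S"
      have "(\<Sum>u\<in>insert t S. g (insert t S - {u}))
          = g (insert t S - {t}) + (\<Sum>u\<in>S. g (insert t S - {u}))"
        using t fS by (simp add: sum.insert)
      also have "insert t S - {t} = S" using t by auto
      also have "(\<Sum>u\<in>S. g (insert t S - {u})) = (\<Sum>u\<in>S. g (insert t (S - {u})))"
        by (intro sum.cong refl arg_cong[where f=g]) (use t in auto)
      finally show "(\<Sum>u\<in>insert t S. g (insert t S - {u})) = g S + (\<Sum>u\<in>S. g (insert t (S - {u})))" .
    qed
    then show ?thesis by (simp add: sum.distrib X_def)
  qed
  have UD: "up_op (down_op N g) S = of_nat (card S) * g S + X"
  proof -
    have "up_op (down_op N g) S = (\<Sum>u\<in>S. g S + (\<Sum>t\<in>N - S. g (insert t (S - {u}))))"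
      unfolding down_op_def up_op_def
    proof (rule sum.cong[OF refl])
      fix u assume u: "u \<in> S"
      have "N - (S - {u}) = insert u (N - S)" using u S by auto
      then have "(\<Sum>t\<in>N - (S - {u}). g (insert t (S - {u})))
          = g (insert u (S - {u})) + (\<Sum>t\<in>N - S. g (insert t (S - {u})))"
        using N u by (simp add: sum.insert)
      also have "insert u (S - {u}) = S" using u by auto
      finally show "(\<Sum>t\<in>N - (S - {u}). g (insert t (S - {u}))) = g S + (\<Sum>t\<in>N - S. g (insert t (S - {u})))" .
    qed
    then show ?thesis by (simp add: sum.distrib X_def sum.swap[of _ S])
  qed
  have "card (N - S) = card N - card S" using S fS by (simp add: card_Diff_subset)
  moreover have "card S \<le> card N" using S N card_mono by blast
  ultimately show ?thesis using DU UD by (simp add: of_nat_diff algebra_simps)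
qed

lemma down_op_eigenvector:
  fixes g :: "'b set \<Rightarrow> 'k::field_char_0"
  assumes N: "finite N" and d: "2 * d < card N"
    and supp: "\<forall>T. g T \<noteq> 0 \<longrightarrow> T \<subseteq> N \<and> card T = d" and T0: "g T0 \<noteq> 0"
    and DU: "\<forall>S. S \<subseteq> N \<and> card S = d \<longrightarrow> down_op N (up_op g) S = \<mu> * g S"
    and mu: "\<mu> \<noteq> of_nat (card N - 2 * d)"
  defines "h \<equiv> (\<lambda>S. if S \<subseteq> N then down_op N g S else 0)"
  shows "0 < d \<and> (\<exists>S0. h S0 \<noteq> 0) \<and> (\<forall>T. h T \<noteq> 0 \<longrightarrow> T \<subseteq> N \<and> card T = d - 1)
     \<and> (\<forall>S. S \<subseteq> N \<and> card S = d - 1 \<longrightarrow> down_op N (up_op h) S = (\<mu> - of_nat (card N - 2 * d)) * h S)"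
proof -
  define c :: 'k where "c = of_nat (card N - 2 * d)"
  have UD: "up_op (down_op N g) S = (\<mu> - c) * g S" if "S \<subseteq> N" "card S = d" for S
  proof -
    have "down_op N (up_op g) S - up_op (down_op N g) S = (of_nat (card N) - 2 * of_nat (card S)) * g S"
      using down_up_minus_up_down[OF N that(1)] .
    moreover have "(of_nat (card N) - 2 * of_nat (card S) :: 'k) = c"
      using d that(2) by (simp add: c_def of_nat_diff)
    ultimately show ?thesis using DU that by (simp add: algebra_simps)
  qed
  have Uh: "up_op h S = up_op (down_op N g) S" if "S \<subseteq> N" for S
    unfolding up_op_def h_def using that by (intro sum.cong) auto
  have hsupp: "T \<subseteq> N \<and> Suc (card T) = d" if hT: "h T \<noteq> 0" for T
  proof -
    have TN: "T \<subseteq> N" using hT unfolding h_def by (auto split: if_splits)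
    with hT have "down_op N g T \<noteq> 0" unfolding h_def by auto
    then obtain t where t: "t \<in> N - T" "g (insert t T) \<noteq> 0"
      unfolding down_op_def by (meson sum.not_neutral_contains_not_neutral)
    then have "card (insert t T) = d" using supp by blast
    moreover have "finite T" using TN N finite_subset by blast
    ultimately show ?thesis using t TN by simp
  qed
  have hne: "\<exists>S0. h S0 \<noteq> 0"
  proof (rule ccontr)
    assume "\<not> ?thesis"
    then have "up_op h T0 = 0" unfolding up_op_def by simp
    moreover have "T0 \<subseteq> N" "card T0 = d" using supp T0 by auto
    ultimately have "(\<mu> - c) * g T0 = 0" using UD Uh by simp
    then show False using T0 mu c_def by simp
  qed
  then have dpos: "0 < d" using hsupp by fastforce
  have "down_op N (up_op h) S = (\<mu> - c) * h S" if S: "S \<subseteq> N" "card S = d - 1" for S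
  proof -
    have fS: "finite S" using S N finite_subset by blast
    have "down_op N (up_op h) S = (\<Sum>t\<in>N - S. (\<mu> - c) * g (insert t S))"
      unfolding down_op_def
    proof (rule sum.cong[OF refl])
      fix t assume t: "t \<in> N - S"
      have "card (insert t S) = d" using t fS S dpos by simp
      then show "up_op h (insert t S) = (\<mu> - c) * g (insert t S)"
        using Uh UD t S by simp
    qed
    also have "\<dots> = (\<mu> - c) * h S" using S by (simp add: h_def down_op_def sum_distrib_left)
    finally show ?thesis .
  qed
  then show ?thesis using dpos hne hsupp c_def by fastforce
qed

text \<open>Descending with \<open>down_op_eigenvector\<close> must stop at some level \<open>d' \<le> d\<close>, where the
  eigenvalue equals \<open>|N| - 2d' > 0\<close>; adding up the shifts gives a positive integer.\<close>
lemma down_up_eigenvalue_pos_nat: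
  assumes N: "finite N"
  shows "2 * d < card N \<Longrightarrow> (\<forall>T. g T \<noteq> 0 \<longrightarrow> T \<subseteq> N \<and> card T = d) \<Longrightarrow> g T0 \<noteq> 0 \<Longrightarrow>
    (\<forall>S. S \<subseteq> N \<and> card S = d \<longrightarrow> down_op N (up_op g) S = \<mu> * g S) \<Longrightarrow>
    \<exists>k>0. \<mu> = (of_nat k :: 'k::field_char_0)"
proof (induction d arbitrary: g T0 \<mu>)
  case (0 g T0 \<mu>)
  show ?case
  proof (cases "\<mu> = of_nat (card N - 2 * 0)")
    case True then show ?thesis using "0.prems"(1) by auto
  next
    case False
    from down_op_eigenvector[OF N "0.prems"(1-4) False] show ?thesis by simp
  qed
next
  case (Suc d g T0 \<mu>)
  show ?case
  proof (cases "\<mu> = of_nat (card N - 2 * Suc d)")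
    case True then show ?thesis using Suc.prems(1) by (intro exI[of _ "card N - 2 * Suc d"]) auto
  next
    case False
    define h where "h \<equiv> (\<lambda>S. if S \<subseteq> N then down_op N g S else (0::'k))"
    from down_op_eigenvector[OF N Suc.prems(1-4) False] obtain S0 where
      "h S0 \<noteq> 0" "\<forall>T. h T \<noteq> 0 \<longrightarrow> T \<subseteq> N \<and> card T = d"
      "\<forall>S. S \<subseteq> N \<and> card S = d \<longrightarrow> down_op N (up_op h) S = (\<mu> - of_nat (card N - 2 * Suc d)) * h S"
      unfolding h_def by auto
    from Suc.IH[OF _ this(2,1,3)] Suc.prems(1) obtain k where k: "k > 0"
      "\<mu> - of_nat (card N - 2 * Suc d) = of_nat k" by auto
    then have "\<mu> = of_nat (k + (card N - 2 * Suc d))" by (simp add: algebra_simps)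
    then show ?thesis using k by (intro exI[of _ "k + (card N - 2 * Suc d)"]) auto
  qed
qed

lemma up_op_injective_below_middle:
  fixes g :: "'b set \<Rightarrow> 'k::field_char_0"
  assumes N: "finite N" and d: "2 * d < card N"
    and supp: "\<forall>T. g T \<noteq> 0 \<longrightarrow> T \<subseteq> N \<and> card T = d"
    and up: "\<forall>T. T \<subseteq> N \<longrightarrow> up_op g T = 0"
  shows "g T = 0"
proof (rule ccontr)
  assume T: "g T \<noteq> 0"
  have "\<forall>S. S \<subseteq> N \<and> card S = d \<longrightarrow> down_op N (up_op g) S = 0 * g S"
    using up unfolding down_op_def by auto
  from down_up_eigenvalue_pos_nat[OF N d supp T this] show False by auto
qed

section \<open>Monomials and the defining ideal\<close>

interpretation VS: vector_space "pscale :: 'k::field \<Rightarrow> ('v,'k) mpoly \<Rightarrow> _"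
  by (rule vector_space_pscale)

definition unit_exp :: "'v \<Rightarrow> 'v \<Rightarrow>\<^sub>0 nat" where
  "unit_exp v = Poly_Mapping.single v 1"

definition set_exp :: "'v set \<Rightarrow> 'v \<Rightarrow>\<^sub>0 nat" where
  "set_exp S = (\<Sum>v\<in>S. unit_exp v)"

definition monom :: "('v \<Rightarrow>\<^sub>0 nat) \<Rightarrow> ('v, 'k::comm_ring_1) mpoly" where
  "monom m = Poly_Mapping.single m 1"

definition indep :: "('v \<Rightarrow> 'v \<Rightarrow> bool) \<Rightarrow> 'v set \<Rightarrow> bool" where
  "indep W S = (\<forall>u\<in>S. \<forall>v\<in>S. \<not> W u v)"

definition standard_exp :: "('v \<Rightarrow> 'v \<Rightarrow> bool) \<Rightarrow> ('v \<Rightarrow>\<^sub>0 nat) \<Rightarrow> bool" where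
  "standard_exp W m = (\<exists>S. finite S \<and> indep W S \<and> m = set_exp S)"

definition divisible_by_gen :: "('v \<Rightarrow> 'v \<Rightarrow> bool) \<Rightarrow> ('v \<Rightarrow>\<^sub>0 nat) \<Rightarrow> bool" where
  "divisible_by_gen W m =
     (\<exists>g r. m = g + r \<and> ((\<exists>v. g = unit_exp v + unit_exp v) \<or> (\<exists>u v. W u v \<and> g = unit_exp u + unit_exp v)))"

definition standard_exps :: "('v \<Rightarrow> 'v \<Rightarrow> bool) \<Rightarrow> nat \<Rightarrow> ('v \<Rightarrow>\<^sub>0 nat) set" where
  "standard_exps W d = {m. mdeg m = d \<and> standard_exp W m}"

abbreviation sum_vars :: "('v::finite, 'k::comm_ring_1) mpoly" where
  "sum_vars \<equiv> \<Sum>v\<in>UNIV. var v"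

lemma lookup_unit_exp: "Poly_Mapping.lookup (unit_exp v) w = (if v = w then 1 else 0)"
  by (simp add: unit_exp_def lookup_single when_def)

lemma lookup_set_exp: "finite S \<Longrightarrow> Poly_Mapping.lookup (set_exp S) v = (if v \<in> S then 1 else 0)"
  by (simp add: set_exp_def lookup_sum lookup_unit_exp)

lemma keys_set_exp: "finite S \<Longrightarrow> Poly_Mapping.keys (set_exp S) = S"
  by (auto simp: in_keys_iff lookup_set_exp split: if_splits)

lemma mdeg_set_exp: "finite S \<Longrightarrow> mdeg (set_exp S) = card S"
  by (simp add: mdeg_def keys_set_exp lookup_set_exp)

lemma set_exp_inject: "finite S \<Longrightarrow> finite T \<Longrightarrow> set_exp S = set_exp T \<Longrightarrow> S = T"
  by (metis keys_set_exp)

lemma set_exp_insert: "finite S \<Longrightarrow> v \<notin> S \<Longrightarrow> set_exp (insert v S) = unit_exp v + set_exp S"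
  by (simp add: set_exp_def)

lemma set_exp_minus_unit_exp: "v \<in> S \<Longrightarrow> finite S \<Longrightarrow> set_exp S - unit_exp v = set_exp (S - {v})"
  using set_exp_insert[of "S - {v}" v] by (simp add: insert_absorb)

lemma lookup_pscale: "Poly_Mapping.lookup (pscale c p) m = c * Poly_Mapping.lookup p m"
  unfolding pscale_def mult_map_scale_conv_mult[symmetric]
  by (simp add: Poly_Mapping.map.rep_eq when_def)

lemma pscale_monom: "pscale c (monom m) = Poly_Mapping.single m c"
  by (simp add: pscale_def monom_def mult_single)

lemma mult_pscale_right: "(f :: ('v, 'k::comm_ring_1) mpoly) * pscale c q = pscale c (f * q)"
  by (simp add: pscale_def mult.left_commute)

lemma lookup_monom: "Poly_Mapping.lookup (monom m) k = (if m = k then 1 else 0)"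
  by (simp add: monom_def lookup_single when_def)

lemma keys_monom: "Poly_Mapping.keys (monom m :: ('v,'k::comm_ring_1) mpoly) = {m}"
  by (simp add: monom_def)

lemma monom_inj: "inj (monom :: ('v \<Rightarrow>\<^sub>0 nat) \<Rightarrow> ('v, 'k::comm_ring_1) mpoly)"
  by (rule injI) (metis keys_monom singleton_inject)

lemma monom_mult: "monom a * monom b = monom (a + b)"
  by (simp add: monom_def mult_single)

lemma var_eq_monom: "var v = monom (unit_exp v)"
  by (simp add: var_def monom_def unit_exp_def)

lemma poly_eq_sum_monoms: "p = (\<Sum>m\<in>Poly_Mapping.keys p. pscale (Poly_Mapping.lookup p m) (monom m))"
  by (rule poly_mapping_eqI) (simp add: pscale_monom lookup_sum lookup_single when_def in_keys_iff)

lemma keys_mult_monom: "Poly_Mapping.keys (f * monom m) \<subseteq> {a + m | a. a \<in> Poly_Mapping.keys f}"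
  using keys_mult[of f "monom m"] by (auto simp: keys_monom)

lemma lookup_var_mult:
  "Poly_Mapping.lookup (var v * p) k =
     (if Poly_Mapping.lookup k v = 0 then 0 else Poly_Mapping.lookup p (k - unit_exp v))"
proof -
  have "var v * p = (\<Sum>m\<in>Poly_Mapping.keys p. pscale (Poly_Mapping.lookup p m) (monom (unit_exp v + m)))"
    by (subst poly_eq_sum_monoms[of p])
       (simp add: sum_distrib_left pscale_def var_eq_monom monom_mult[symmetric] mult.left_commute)
  moreover have "unit_exp v + m = k \<longleftrightarrow> Poly_Mapping.lookup k v \<noteq> 0 \<and> m = k - unit_exp v" for m
    by (auto simp: poly_mapping_eq_iff fun_eq_iff lookup_add lookup_unit_exp minus_poly_mapping.rep_eq
        split: if_splits)
  ultimately show ?thesis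
    by (simp add: lookup_sum lookup_pscale lookup_monom in_keys_iff if_distrib cong: if_cong)
qed

lemma ideal_gen_zero: "0 \<in> ideal_gen S"
  unfolding ideal_gen_def by (intro CollectI exI[of _ "{}"]) auto

lemma ideal_gen_mult: "g \<in> S \<Longrightarrow> c * g \<in> ideal_gen S"
  unfolding ideal_gen_def by (intro CollectI exI[of _ "{g}"] exI[of _ "\<lambda>_. c"]) auto

lemma ideal_gen_add:
  assumes "p \<in> ideal_gen S" "q \<in> ideal_gen S"
  shows "p + q \<in> ideal_gen S"
proof -
  from assms obtain F1 c1 F2 c2 where 1: "finite F1" "F1 \<subseteq> S" "p = (\<Sum>g\<in>F1. c1 g * g)"
    and 2: "finite F2" "F2 \<subseteq> S" "q = (\<Sum>g\<in>F2. c2 g * g)"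
    unfolding ideal_gen_def by blast
  define c where "c g = (if g \<in> F1 then c1 g else 0) + (if g \<in> F2 then c2 g else 0)" for g
  have "(\<Sum>g\<in>F1 \<union> F2. c g * g) = (\<Sum>g\<in>F1 \<union> F2. (if g \<in> F1 then c1 g * g else 0))
     + (\<Sum>g\<in>F1 \<union> F2. (if g \<in> F2 then c2 g * g else 0))"
    unfolding sum.distrib[symmetric] by (rule sum.cong) (auto simp: c_def distrib_right)
  also have "\<dots> = p + q"
    using 1 2 by (simp add: sum.If_cases Int_absorb1 Int_absorb2)
  finally show ?thesis unfolding ideal_gen_def using 1 2
    by (intro CollectI exI[of _ "F1 \<union> F2"] exI[of _ c]) auto
qed

lemma ideal_gen_sum: "finite A \<Longrightarrow> (\<And>x. x \<in> A \<Longrightarrow> f x \<in> ideal_gen S) \<Longrightarrow> sum f A \<in> ideal_gen S"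
  by (induction A rule: finite_induct) (auto intro: ideal_gen_add ideal_gen_zero)

lemma artin_ideal_eq_monom_gens:
  "artin_ideal W = ideal_gen ({monom (unit_exp v + unit_exp v) | v. True}
                              \<union> {monom (unit_exp u + unit_exp v) | u v. W u v})"
  unfolding artin_ideal_def var_eq_monom monom_mult ..

lemma artin_ideal_iff: "p \<in> artin_ideal W \<longleftrightarrow> (\<forall>m\<in>Poly_Mapping.keys p. divisible_by_gen W m)"
proof
  let ?G = "{monom (unit_exp v + unit_exp v) | v. True} \<union> {monom (unit_exp u + unit_exp v) | u v. W u v}
    :: ('a, 'b) mpoly set"
  assume "p \<in> artin_ideal W"
  then obtain F c where F: "finite F" "F \<subseteq> ?G" "p = (\<Sum>g\<in>F. c g * g)"
    unfolding artin_ideal_eq_monom_gens ideal_gen_def by blast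
  show "\<forall>m\<in>Poly_Mapping.keys p. divisible_by_gen W m"
  proof
    fix m assume "m \<in> Poly_Mapping.keys p"
    then obtain g where g: "g \<in> F" "m \<in> Poly_Mapping.keys (c g * g)"
      using keys_sum[of "\<lambda>g. c g * g" F] F(3) by blast
    from g(1) F(2) obtain gm where gm: "g = monom gm"
      "(\<exists>v. gm = unit_exp v + unit_exp v) \<or> (\<exists>u v. W u v \<and> gm = unit_exp u + unit_exp v)"
      by blast
    from g(2) keys_mult_monom[of "c g" gm] obtain a where "m = a + gm"
      unfolding gm(1) by blast
    then show "divisible_by_gen W m" unfolding divisible_by_gen_def using gm(2) by (metis add.commute)
  qed
next
  assume div: "\<forall>m\<in>Poly_Mapping.keys p. divisible_by_gen W m"
  have "(\<Sum>m\<in>Poly_Mapping.keys p. pscale (Poly_Mapping.lookup p m) (monom m)) \<in> artin_ideal W"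
    unfolding artin_ideal_eq_monom_gens
  proof (rule ideal_gen_sum)
    fix m assume "m \<in> Poly_Mapping.keys p"
    then obtain g r where gr: "m = g + r"
      "(\<exists>v. g = unit_exp v + unit_exp v) \<or> (\<exists>u v. W u v \<and> g = unit_exp u + unit_exp v)"
      using div unfolding divisible_by_gen_def by blast
    have "pscale (Poly_Mapping.lookup p m) (monom m)
        = Poly_Mapping.single r (Poly_Mapping.lookup p m) * monom g"
      unfolding pscale_monom by (simp add: monom_def mult_single gr(1) add.commute)
    then show "pscale (Poly_Mapping.lookup p m) (monom m) \<in> ideal_gen ({monom (unit_exp v + unit_exp v) | v. True}
        \<union> {monom (unit_exp u + unit_exp v) | u v. W u v})"
      using gr(2) by (auto intro!: ideal_gen_mult)
  qed simp
  then show "p \<in> artin_ideal W" using poly_eq_sum_monoms[of p] by simp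
qed

lemma standard_exp_not_divisible:
  assumes irr: "\<And>u. \<not> W u u" and std: "standard_exp W m"
  shows "\<not> divisible_by_gen W m"
proof
  assume "divisible_by_gen W m"
  then obtain g r where gr: "m = g + r"
    "(\<exists>v. g = unit_exp v + unit_exp v) \<or> (\<exists>u v. W u v \<and> g = unit_exp u + unit_exp v)"
    unfolding divisible_by_gen_def by blast
  from std obtain S where S: "finite S" "indep W S" "m = set_exp S" unfolding standard_exp_def by blast
  have le: "Poly_Mapping.lookup m v \<le> 1" for v using S by (simp add: lookup_set_exp)
  from gr(2) show False
  proof
    assume "\<exists>v. g = unit_exp v + unit_exp v"
    then obtain v where "g = unit_exp v + unit_exp v" by blast
    then have "Poly_Mapping.lookup m v \<ge> 2" using gr(1) by (simp add: lookup_add lookup_unit_exp)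
    then show False using le[of v] by simp
  next
    assume "\<exists>u v. W u v \<and> g = unit_exp u + unit_exp v"
    then obtain u v where uv: "W u v" "g = unit_exp u + unit_exp v" by blast
    have "Poly_Mapping.lookup m u \<ge> 1" "Poly_Mapping.lookup m v \<ge> 1"
      using gr(1) uv by (auto simp: lookup_add lookup_unit_exp)
    then have "u \<in> S" "v \<in> S" using S by (auto simp: lookup_set_exp split: if_splits)
    then show False using S(2) uv unfolding indep_def by blast
  qed
qed

lemma divisible_if_not_standard:
  assumes irr: "\<And>u. \<not> W u u" and nstd: "\<not> standard_exp W m"
  shows "divisible_by_gen W m"
proof (cases "\<exists>v. Poly_Mapping.lookup m v \<ge> 2")
  case True
  then obtain v where v: "Poly_Mapping.lookup m v \<ge> 2" by blast
  have "m = (unit_exp v + unit_exp v) + (m - (unit_exp v + unit_exp v))"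
    using v by (auto simp: poly_mapping_eq_iff fun_eq_iff lookup_add lookup_unit_exp minus_poly_mapping.rep_eq)
  then show ?thesis unfolding divisible_by_gen_def by blast
next
  case False
  then have "m = set_exp (Poly_Mapping.keys m)"
    by (auto simp: poly_mapping_eq_iff fun_eq_iff lookup_set_exp in_keys_iff not_le less_2_cases_iff)
       (metis less_numeral_extra(3))
  then have "\<not> indep W (Poly_Mapping.keys m)"
    using nstd finite_keys[of m] unfolding standard_exp_def by blast
  then obtain u v where uv: "u \<in> Poly_Mapping.keys m" "v \<in> Poly_Mapping.keys m" "W u v"
    unfolding indep_def by blast
  have "u \<noteq> v" using irr uv(3) by blast
  then have "m = (unit_exp u + unit_exp v) + (m - (unit_exp u + unit_exp v))"
    using uv by (auto simp: poly_mapping_eq_iff fun_eq_iff lookup_add lookup_unit_exp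
        minus_poly_mapping.rep_eq in_keys_iff)
  then show ?thesis unfolding divisible_by_gen_def using uv(3) by blast
qed

lemma divisible_by_gen_iff: "(\<And>u. \<not> W u u) \<Longrightarrow> divisible_by_gen W m \<longleftrightarrow> \<not> standard_exp W m"
  using standard_exp_not_divisible divisible_if_not_standard by blast

lemma standard_exp_set_exp: "finite S \<Longrightarrow> standard_exp W (set_exp S) \<longleftrightarrow> indep W S"
  unfolding standard_exp_def using set_exp_inject by blast

lemma standard_exp_lookup_le_1: "standard_exp W m \<Longrightarrow> Poly_Mapping.lookup m v \<le> 1"
  unfolding standard_exp_def by (auto simp: lookup_set_exp)

section \<open>Homogeneous components and their dimensions\<close>

lemma mdeg_UNIV: "mdeg (m :: 'v::finite \<Rightarrow>\<^sub>0 nat) = (\<Sum>v\<in>UNIV. Poly_Mapping.lookup m v)"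
  unfolding mdeg_def by (rule sum.mono_neutral_left) (auto simp: in_keys_iff)

lemma mdeg_add: "mdeg (a + b :: 'v::finite \<Rightarrow>\<^sub>0 nat) = mdeg a + mdeg b"
  by (simp add: mdeg_UNIV lookup_add sum.distrib)

lemma mdeg_unit_exp: "mdeg (unit_exp v :: 'v::finite \<Rightarrow>\<^sub>0 nat) = 1"
  by (simp add: mdeg_UNIV lookup_unit_exp)

lemma lookup_le_mdeg: "Poly_Mapping.lookup m v \<le> mdeg (m :: 'v::finite \<Rightarrow>\<^sub>0 nat)"
  unfolding mdeg_UNIV by (rule member_le_sum) auto

lemma finite_mdeg_eq: "finite {m :: 'v::finite \<Rightarrow>\<^sub>0 nat. mdeg m = d}"
proof -
  have "Poly_Mapping.lookup ` {m :: 'v \<Rightarrow>\<^sub>0 nat. mdeg m = d} \<subseteq> {f. \<forall>v. f v \<in> {0..d}}"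
    using lookup_le_mdeg by fastforce
  moreover have "finite {f :: 'v \<Rightarrow> nat. \<forall>v. f v \<in> {0..d}}"
    using finite_set_of_finite_funs[of "UNIV :: 'v set" "{0..d}"] by simp
  ultimately have "finite (Poly_Mapping.lookup ` {m :: 'v \<Rightarrow>\<^sub>0 nat. mdeg m = d})" by (rule finite_subset)
  moreover have "inj_on Poly_Mapping.lookup {m :: 'v \<Rightarrow>\<^sub>0 nat. mdeg m = d}"
    by (rule inj_onI) (simp add: poly_mapping_eqI)
  ultimately show ?thesis by (rule finite_imageD)
qed

lemma finite_standard_exps: "finite (standard_exps W d :: ('v::finite \<Rightarrow>\<^sub>0 nat) set)"
  unfolding standard_exps_def by (rule finite_subset[OF _ finite_mdeg_eq[of d]]) auto

lemma sum_vars_mult_homog: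
  "(\<lambda>p. sum_vars * p) ` homog i \<subseteq> (homog (Suc i) :: ('v::finite, 'k::comm_ring_1) mpoly set)"
proof (intro image_subsetI, unfold homog_def, intro CollectI ballI)
  fix p :: "('v, 'k) mpoly" and m
  assume p: "p \<in> {p. \<forall>m\<in>Poly_Mapping.keys p. mdeg m = i}" and "m \<in> Poly_Mapping.keys (sum_vars * p)"
  then obtain v where "m \<in> Poly_Mapping.keys (monom (unit_exp v) * p)"
    using keys_sum[of "\<lambda>v. var v * p" UNIV] by (auto simp: sum_distrib_right var_eq_monom)
  then obtain m' where "m = unit_exp v + m'" "m' \<in> Poly_Mapping.keys p"
    using keys_mult[of "monom (unit_exp v)" p] by (auto simp: keys_monom)
  then show "mdeg m = Suc i" using p by (simp add: mdeg_add mdeg_unit_exp)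
qed

lemma monom_in_homog: "(monom m :: ('v, 'k::comm_ring_1) mpoly) \<in> homog d \<longleftrightarrow> mdeg m = d"
  by (simp add: homog_def keys_monom)

lemma keys_pscale_subset: "Poly_Mapping.keys (pscale c x) \<subseteq> Poly_Mapping.keys x"
  by (auto simp: in_keys_iff lookup_pscale)

lemma subspace_keys_subset: "VS.subspace {p :: ('v, 'k::field) mpoly. Poly_Mapping.keys p \<subseteq> X}"
proof (rule VS.subspaceI)
  fix x y :: "('v, 'k) mpoly"
  assume "x \<in> {p. Poly_Mapping.keys p \<subseteq> X}" "y \<in> {p. Poly_Mapping.keys p \<subseteq> X}"
  then show "x + y \<in> {p. Poly_Mapping.keys p \<subseteq> X}" using keys_add[of x y] by blast
next
  fix c :: 'k and x :: "('v, 'k) mpoly"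
  assume "x \<in> {p. Poly_Mapping.keys p \<subseteq> X}"
  then show "pscale c x \<in> {p. Poly_Mapping.keys p \<subseteq> X}" using keys_pscale_subset[of c x] by blast
qed simp

lemma subspace_homog: "VS.subspace (homog d :: ('v, 'k::field) mpoly set)"
proof -
  have "homog d = {p :: ('v, 'k) mpoly. Poly_Mapping.keys p \<subseteq> {m. mdeg m = d}}"
    by (auto simp: homog_def)
  then show ?thesis using subspace_keys_subset by metis
qed

lemma in_span_monoms_iff:
  "p \<in> VS.span (monom ` X :: ('v, 'k::field) mpoly set) \<longleftrightarrow> Poly_Mapping.keys p \<subseteq> X"
proof
  assume "p \<in> VS.span (monom ` X)"
  moreover have "VS.span (monom ` X) \<subseteq> {p :: ('v, 'k) mpoly. Poly_Mapping.keys p \<subseteq> X}"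
    by (rule VS.span_minimal[OF _ subspace_keys_subset]) (auto simp: keys_monom)
  ultimately show "Poly_Mapping.keys p \<subseteq> X" by blast
next
  assume "Poly_Mapping.keys p \<subseteq> X"
  then have "\<forall>m\<in>Poly_Mapping.keys p. monom m \<in> VS.span (monom ` X :: ('v, 'k) mpoly set)"
    by (auto intro: VS.span_base)
  then show "p \<in> VS.span (monom ` X)"
    by (subst poly_eq_sum_monoms[of p]) (intro VS.span_sum VS.span_scale, blast)
qed

lemma independent_monoms: "VS.independent (monom ` X :: ('v, 'k::field) mpoly set)"
proof
  assume "VS.dependent (monom ` X :: ('v, 'k) mpoly set)"
  then obtain m where "m \<in> X" "monom m \<in> VS.span (monom ` (X - {m}) :: ('v, 'k) mpoly set)"
    unfolding VS.dependent_def by (auto simp: image_set_diff[OF monom_inj])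
  then show False by (simp add: in_span_monoms_iff keys_monom)
qed

lemma dim_span_monoms:
  assumes "finite X"
  shows "VS.dim (VS.span (monom ` X :: ('v, 'k::field) mpoly set)) = card X"
proof -
  have "card (monom ` X :: ('v, 'k) mpoly set) = card X"
    by (rule card_image) (rule inj_on_subset[OF monom_inj], simp)
  then show ?thesis by (simp add: VS.dim_eq_card_independent[OF independent_monoms])
qed

lemma homog_eq_span: "homog d = VS.span (monom ` {m. mdeg m = d} :: ('v, 'k::field) mpoly set)"
  by (auto simp: in_span_monoms_iff homog_def)

lemma artin_ideal_homog_eq_span:
  "artin_ideal W \<inter> homog d
     = VS.span (monom ` {m. mdeg m = d \<and> divisible_by_gen W m} :: ('v, 'k::field) mpoly set)"
  by (auto simp: in_span_monoms_iff homog_def artin_ideal_iff)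

lemma artin_dim_eq_card:
  assumes irr: "\<And>u. \<not> W u u"
  shows "artin_dim W d (K :: 'k::field itself) = card (standard_exps W d :: ('v::finite \<Rightarrow>\<^sub>0 nat) set)"
proof -
  have fin: "finite {m :: 'v \<Rightarrow>\<^sub>0 nat. mdeg m = d \<and> divisible_by_gen W m}"
    by (rule finite_subset[OF _ finite_mdeg_eq[of d]]) auto
  have "artin_dim W d K
      = card {m :: 'v \<Rightarrow>\<^sub>0 nat. mdeg m = d} - card {m :: 'v \<Rightarrow>\<^sub>0 nat. mdeg m = d \<and> divisible_by_gen W m}"
    unfolding artin_dim_def artin_ideal_homog_eq_span unfolding homog_eq_span
    by (simp only: dim_span_monoms finite_mdeg_eq fin)
  also have "\<dots> = card ({m :: 'v \<Rightarrow>\<^sub>0 nat. mdeg m = d} - {m. mdeg m = d \<and> divisible_by_gen W m})"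
    by (rule card_Diff_subset[symmetric]) (use fin in auto)
  also have "{m :: 'v \<Rightarrow>\<^sub>0 nat. mdeg m = d} - {m. mdeg m = d \<and> divisible_by_gen W m} = standard_exps W d"
    using divisible_by_gen_iff[of W, OF irr] by (auto simp: standard_exps_def)
  finally show ?thesis .
qed

section \<open>Normal forms and ranks of multiplication maps\<close>

definition normal_form :: "('v \<Rightarrow> 'v \<Rightarrow> bool) \<Rightarrow> ('v, 'k::comm_ring_1) mpoly \<Rightarrow> ('v, 'k) mpoly" where
  "normal_form W p =
     (\<Sum>m\<in>{m\<in>Poly_Mapping.keys p. standard_exp W m}. pscale (Poly_Mapping.lookup p m) (monom m))"

lemma lookup_normal_form:
  "Poly_Mapping.lookup (normal_form W p) k = (if standard_exp W k then Poly_Mapping.lookup p k else 0)"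
proof -
  have "Poly_Mapping.lookup (normal_form W p) k
      = (\<Sum>m\<in>{m\<in>Poly_Mapping.keys p. standard_exp W m}. if m = k then Poly_Mapping.lookup p m else 0)"
    unfolding normal_form_def by (simp add: lookup_sum lookup_pscale lookup_monom if_distrib cong: if_cong)
  then show ?thesis by (simp add: in_keys_iff)
qed

lemma normal_form_add: "normal_form W (p + q) = normal_form W p + normal_form W q"
  by (rule poly_mapping_eqI) (simp add: lookup_normal_form lookup_add)

lemma normal_form_diff: "normal_form W (p - q) = normal_form W p - (normal_form W q :: ('v, 'k::comm_ring_1) mpoly)"
  by (rule poly_mapping_eqI) (simp add: lookup_normal_form lookup_minus)

lemma normal_form_pscale: "normal_form W (pscale c p) = pscale c (normal_form W p)"
  by (rule poly_mapping_eqI) (simp add: lookup_normal_form lookup_pscale)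

lemma normal_form_idem: "normal_form W (normal_form W p) = normal_form W p"
  by (rule poly_mapping_eqI) (simp add: lookup_normal_form)

lemma normal_form_0 [simp]: "normal_form W 0 = 0"
  by (rule poly_mapping_eqI) (simp add: lookup_normal_form)

lemma normal_form_sum: "normal_form W (sum f A) = (\<Sum>x\<in>A. normal_form W (f x))"
  by (induction A rule: infinite_finite_induct) (simp_all add: normal_form_add)

lemma keys_normal_form: "Poly_Mapping.keys (normal_form W p) = {m\<in>Poly_Mapping.keys p. standard_exp W m}"
  by (auto simp: in_keys_iff lookup_normal_form split: if_splits)

lemma normal_form_eq_self: "(\<And>m. m \<in> Poly_Mapping.keys p \<Longrightarrow> standard_exp W m) \<Longrightarrow> normal_form W p = p"
  by (rule poly_mapping_eqI) (auto simp: lookup_normal_form in_keys_iff)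

lemma normal_form_monom: "normal_form W (monom m) = (if standard_exp W m then monom m else 0)"
  by (rule poly_mapping_eqI) (simp add: lookup_normal_form lookup_monom)

lemma normal_form_eq_0_iff:
  assumes irr: "\<And>u. \<not> W u u"
  shows "normal_form W p = 0 \<longleftrightarrow> p \<in> artin_ideal W"
proof -
  have "normal_form W p = 0 \<longleftrightarrow> Poly_Mapping.keys (normal_form W p) = {}" by simp
  also have "\<dots> \<longleftrightarrow> (\<forall>m\<in>Poly_Mapping.keys p. \<not> standard_exp W m)" by (auto simp: keys_normal_form)
  finally show ?thesis by (simp add: artin_ideal_iff divisible_by_gen_iff[of W, OF irr])
qed

lemma normal_form_homog: "p \<in> homog d \<Longrightarrow> normal_form W p \<in> homog d"
  by (auto simp: homog_def keys_normal_form)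

lemma diff_normal_form_in_artin_ideal:
  fixes x :: "('v, 'k::field) mpoly"
  assumes irr: "\<And>u. \<not> W u u" and x: "x \<in> homog d"
  shows "x - normal_form W x \<in> artin_ideal W \<inter> homog d"
  using normal_form_eq_0_iff[of W, OF irr, where p = "x - normal_form W x"]
    VS.subspace_diff[OF subspace_homog x normal_form_homog[OF x]]
  by (simp add: normal_form_diff normal_form_idem)

lemma divisible_by_gen_add: "divisible_by_gen W b \<Longrightarrow> divisible_by_gen W (a + b)"
  unfolding divisible_by_gen_def by (metis add.commute add.left_commute)

lemma normal_form_mult_monom_eq_0:
  assumes irr: "\<And>u. \<not> W u u" and "\<not> standard_exp W m"
  shows "normal_form W (f * monom m) = 0"
proof -
  have "divisible_by_gen W m" using assms by (simp add: divisible_by_gen_iff)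
  then show ?thesis
    using keys_mult_monom[of f m] divisible_by_gen_add
    by (auto simp: normal_form_eq_0_iff[of W, OF irr] artin_ideal_iff)
qed

lemma independent_Un_by_projection:
  fixes f :: "('v, 'k::field) mpoly \<Rightarrow> ('v, 'k) mpoly"
  assumes add: "\<And>x y. f (x + y) = f x + f y" and sc: "\<And>c x. f (pscale c x) = pscale c (f x)"
    and B1: "VS.independent B1" and B2: "VS.independent B2"
    and f1: "\<And>b. b \<in> B1 \<Longrightarrow> f b = b" and f2: "\<And>b. b \<in> B2 \<Longrightarrow> f b = 0"
  shows "VS.independent (B1 \<union> B2)"
proof
  have f0: "f 0 = 0" using add[of 0 0] by simp
  have S1: "VS.span B1 \<subseteq> {x. f x = x}"
    by (rule VS.span_minimal) (use f1 in blast, rule VS.subspaceI, simp_all add: f0 add sc)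
  have S2: "VS.span B2 \<subseteq> {x. f x = 0}"
    by (rule VS.span_minimal) (use f2 in blast, rule VS.subspaceI, simp_all add: f0 add sc)
  assume "VS.dependent (B1 \<union> B2)"
  then obtain a where a: "a \<in> B1 \<union> B2" "a \<in> VS.span ((B1 - {a}) \<union> (B2 - {a}))"
    unfolding VS.dependent_def by (metis Un_Diff)
  then obtain x y where xy: "a = x + y" "x \<in> VS.span (B1 - {a})" "y \<in> VS.span (B2 - {a})"
    unfolding VS.span_Un by blast
  have "f x = x" "f y = 0"
    using xy S1 S2 VS.span_mono[of "B1 - {a}" B1] VS.span_mono[of "B2 - {a}" B2] by blast+
  then have fa: "f a = x" using xy(1) add by simp
  show False
  proof (cases "a \<in> B1")
    case True
    then have "a = x" using f1 fa by simp
    then show False using True xy(2) B1 unfolding VS.dependent_def by auto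
  next
    case False
    then have aB2: "a \<in> B2" using a(1) by blast
    then have "a = y" using f2 fa xy(1) by simp
    then show False using aB2 xy(3) B2 unfolding VS.dependent_def by auto
  qed
qed

lemma independent_card_le_dim_of_finite_span:
  assumes G: "finite G" and PG: "P \<subseteq> VS.span G" and Q: "VS.independent Q" and QP: "Q \<subseteq> VS.span P"
  shows "card Q \<le> VS.dim (P :: ('v, 'k::field) mpoly set)"
proof -
  obtain B where B: "B \<subseteq> P" "VS.independent B" "P \<subseteq> VS.span B" "card B = VS.dim P"
    by (rule VS.basis_exists)
  have fB: "finite B" using VS.independent_span_bound[OF G B(2)] B(1) PG by blast
  have QB: "Q \<subseteq> VS.span B" using QP VS.span_minimal[OF B(3) VS.subspace_span] by blast
  show ?thesis using VS.independent_span_bound[OF fB Q QB] B(4) by simp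
qed

text \<open>The image of \<open>A\<^sub>i \<rightarrow> A\<^sub>i\<^sub>+\<^sub>1\<close>, \<open>[p] \<mapsto> [f p]\<close>, with classes represented by their normal forms.\<close>
definition nf_mult_image :: "('v \<Rightarrow> 'v \<Rightarrow> bool) \<Rightarrow> ('v, 'k::comm_ring_1) mpoly \<Rightarrow> nat \<Rightarrow> ('v, 'k) mpoly set" where
  "nf_mult_image W f i = normal_form W ` (\<lambda>p. f * p) ` homog i"

lemma nf_mult_image_subset_span:
  assumes hom: "(\<lambda>p. f * p) ` homog i \<subseteq> homog (Suc i)"
  shows "nf_mult_image W f i \<subseteq> VS.span (monom ` standard_exps W (Suc i) :: ('v, 'k::field) mpoly set)"
  using hom by (fastforce simp: nf_mult_image_def in_span_monoms_iff keys_normal_form standard_exps_def homog_def)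

lemma dim_Un_artin_ideal:
  fixes P :: "('v::finite, 'k::field) mpoly set"
  assumes irr: "\<And>u. \<not> W u u" and P: "P \<subseteq> VS.span (monom ` standard_exps W d)"
  shows "VS.dim (P \<union> (artin_ideal W \<inter> homog d))
           = VS.dim P + VS.dim (artin_ideal W \<inter> homog d :: ('v, 'k) mpoly set)"
proof -
  define Bd where "Bd = (monom ` {m. mdeg m = d \<and> divisible_by_gen W m} :: ('v, 'k) mpoly set)"
  have J: "artin_ideal W \<inter> homog d = VS.span Bd" unfolding Bd_def by (rule artin_ideal_homog_eq_span)
  have finBd: "finite Bd"
    unfolding Bd_def by (rule finite_imageI, rule finite_subset[OF _ finite_mdeg_eq[of d]]) auto
  obtain B where B: "B \<subseteq> P" "VS.independent B" "P \<subseteq> VS.span B" "card B = VS.dim P"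
    by (rule VS.basis_exists)
  have finB: "finite B"
    using VS.independent_span_bound[OF finite_imageI[OF finite_standard_exps] B(2)] B(1) P by blast
  have fixB: "normal_form W b = b" if "b \<in> B" for b
  proof (rule normal_form_eq_self)
    have "b \<in> VS.span (monom ` standard_exps W d)" using that B(1) P by blast
    then show "standard_exp W m" if "m \<in> Poly_Mapping.keys b" for m
      using that unfolding in_span_monoms_iff standard_exps_def by blast
  qed
  have killBd: "normal_form W b = 0" if "b \<in> Bd" for b
    using that by (auto simp: Bd_def normal_form_eq_0_iff[of W, OF irr] artin_ideal_iff keys_monom)
  have ind: "VS.independent (B \<union> Bd)"
    by (rule independent_Un_by_projection[OF normal_form_add normal_form_pscale B(2) _ fixB killBd])
       (simp add: Bd_def independent_monoms)
  have disj: "B \<inter> Bd = {}"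
    using fixB killBd B(2) VS.dependent_zero by fastforce
  have "VS.span (P \<union> VS.span Bd) = VS.span (B \<union> Bd)"
    unfolding VS.span_eq using B(1,3) VS.span_mono[of B "B \<union> Bd"] VS.span_mono[of Bd "B \<union> Bd"]
    by (auto intro: VS.span_base VS.span_superset[THEN subsetD])
  then have dimPJ: "VS.dim (P \<union> (artin_ideal W \<inter> homog d)) = card B + card Bd"
    unfolding J using VS.span_eq_dim VS.dim_eq_card_independent[OF ind] card_Un_disjoint[OF finB finBd disj]
    by metis
  have "VS.dim (VS.span Bd) = card Bd"
    unfolding Bd_def by (rule VS.dim_span_eq_card_independent[OF independent_monoms])
  then have dimJ: "VS.dim (artin_ideal W \<inter> homog d :: ('v, 'k) mpoly set) = card Bd" using J by simp
  show ?thesis using dimPJ dimJ B(4) by linarith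
qed

lemma span_mult_image_Un_artin_ideal:
  assumes irr: "\<And>u. \<not> W u u" and hom: "(\<lambda>p. f * p) ` homog i \<subseteq> homog (Suc i)"
  defines "J \<equiv> artin_ideal W \<inter> homog (Suc i)"
  shows "VS.span ((\<lambda>p. f * p) ` homog i \<union> J) = VS.span (nf_mult_image W f i \<union> (J :: ('v, 'k::field) mpoly set))"
proof -
  have diff_in_J: "f * p - normal_form W (f * p) \<in> J" if "p \<in> homog i" for p
    unfolding J_def using that hom by (intro diff_normal_form_in_artin_ideal[where W = W, OF irr]) blast
  have "(\<lambda>p. f * p) ` homog i \<union> J \<subseteq> VS.span (nf_mult_image W f i \<union> J)"
  proof -
    have "f * p \<in> VS.span (nf_mult_image W f i \<union> J)" if "p \<in> homog i" for p
    proof -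
      have "f * p = normal_form W (f * p) + (f * p - normal_form W (f * p))" by simp
      moreover have "normal_form W (f * p) \<in> nf_mult_image W f i"
        using that unfolding nf_mult_image_def by blast
      ultimately show ?thesis using diff_in_J[OF that] by (metis UnI1 UnI2 VS.span_add VS.span_base)
    qed
    then show ?thesis by (auto intro: VS.span_base)
  qed
  moreover have "nf_mult_image W f i \<union> J \<subseteq> VS.span ((\<lambda>p. f * p) ` homog i \<union> J)"
  proof -
    have "normal_form W (f * p) \<in> VS.span ((\<lambda>p. f * p) ` homog i \<union> J)" if "p \<in> homog i" for p
    proof -
      have "normal_form W (f * p) = f * p - (f * p - normal_form W (f * p))" by simp
      then show ?thesis using diff_in_J[OF that] that by (metis UnI1 UnI2 VS.span_diff VS.span_base imageI)
    qed
    then show ?thesis unfolding nf_mult_image_def by (auto intro: VS.span_base)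
  qed
  ultimately show ?thesis unfolding VS.span_eq ..
qed

lemma artin_mult_rank_eq_dim:
  fixes f :: "('v::finite, 'k::field) mpoly"
  assumes irr: "\<And>u. \<not> W u u" and hom: "(\<lambda>p. f * p) ` homog i \<subseteq> homog (Suc i)"
  shows "artin_mult_rank W f i = VS.dim (nf_mult_image W f i)"
  unfolding artin_mult_rank_def
  using VS.span_eq_dim[OF span_mult_image_Un_artin_ideal[where W = W, OF irr hom]]
    dim_Un_artin_ideal[where W = W, OF irr nf_mult_image_subset_span[OF hom]]
  by linarith

lemma dim_nf_mult_image_le_Suc:
  fixes f :: "('v::finite, 'k::field) mpoly"
  assumes hom: "(\<lambda>p. f * p) ` homog i \<subseteq> homog (Suc i)"
  shows "VS.dim (nf_mult_image W f i) \<le> card (standard_exps W (Suc i))"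
proof -
  have "VS.dim (nf_mult_image W f i) \<le> card (monom ` standard_exps W (Suc i) :: ('v, 'k) mpoly set)"
    by (rule VS.dim_le_card[OF nf_mult_image_subset_span[OF hom]])
       (rule finite_imageI[OF finite_standard_exps])
  also have "\<dots> \<le> card (standard_exps W (Suc i))" by (rule card_image_le[OF finite_standard_exps])
  finally show ?thesis .
qed

lemma nf_mult_image_subset_span_nf_monoms:
  fixes f :: "('v, 'k::field) mpoly"
  assumes irr: "\<And>u. \<not> W u u"
  shows "nf_mult_image W f i \<subseteq> VS.span ((\<lambda>m. normal_form W (f * monom m)) ` standard_exps W i)"
proof
  fix x assume "x \<in> nf_mult_image W f i"
  then obtain p where p: "p \<in> homog i" "x = normal_form W (f * p)" unfolding nf_mult_image_def by blast
  have "normal_form W (f * p)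
      = (\<Sum>m\<in>Poly_Mapping.keys p. pscale (Poly_Mapping.lookup p m) (normal_form W (f * monom m)))"
    by (subst poly_eq_sum_monoms[of p])
       (simp add: sum_distrib_left normal_form_sum mult_pscale_right normal_form_pscale)
  also have "\<dots> \<in> VS.span ((\<lambda>m. normal_form W (f * monom m)) ` standard_exps W i)"
  proof (intro VS.span_sum VS.span_scale)
    fix m assume m: "m \<in> Poly_Mapping.keys p"
    show "normal_form W (f * monom m) \<in> VS.span ((\<lambda>m. normal_form W (f * monom m)) ` standard_exps W i)"
    proof (cases "standard_exp W m")
      case True
      then have "m \<in> standard_exps W i" using m p(1) unfolding standard_exps_def homog_def by blast
      then show ?thesis by (intro VS.span_base) blast
    next
      case False
      then have "normal_form W (f * monom m) = 0" by (rule normal_form_mult_monom_eq_0[of W, OF irr])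
      then show ?thesis by (simp add: VS.span_zero)
    qed
  qed
  finally show "x \<in> VS.span ((\<lambda>m. normal_form W (f * monom m)) ` standard_exps W i)" using p(2) by simp
qed

lemma dim_nf_mult_image_le:
  fixes f :: "('v::finite, 'k::field) mpoly"
  assumes irr: "\<And>u. \<not> W u u"
  shows "VS.dim (nf_mult_image W f i) \<le> card (standard_exps W i)"
proof -
  have "VS.dim (nf_mult_image W f i) \<le> card ((\<lambda>m. normal_form W (f * monom m)) ` standard_exps W i)"
    by (rule VS.dim_le_card[OF nf_mult_image_subset_span_nf_monoms[where W = W, OF irr]])
       (rule finite_imageI[OF finite_standard_exps])
  also have "\<dots> \<le> card (standard_exps W i)" by (rule card_image_le[OF finite_standard_exps])
  finally show ?thesis .
qed

lemma card_le_dim_nf_mult_image_if_injective: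
  fixes f :: "('v::finite, 'k::field) mpoly"
  assumes irr: "\<And>u. \<not> W u u" and hom: "(\<lambda>p. f * p) ` homog i \<subseteq> homog (Suc i)"
    and inj: "artin_mult_injective W f i"
  shows "card (standard_exps W i) \<le> VS.dim (nf_mult_image W f i)"
proof -
  define F where "F x = normal_form W (f * x)" for x
  define B where "B = (monom ` standard_exps W i :: ('v, 'k) mpoly set)"
  have linF: "Vector_Spaces.linear pscale pscale F"
    unfolding Vector_Spaces.linear_iff F_def using vector_space_pscale[where 'k='k and 'v='v]
    by (simp add: distrib_left normal_form_add mult_pscale_right normal_form_pscale)
  have injF: "inj_on F (VS.span B)"
  proof (rule inj_onI)
    fix x y assume "x \<in> VS.span B" "y \<in> VS.span B" and Fxy: "F x = F y"
    then have keys: "Poly_Mapping.keys (x - y) \<subseteq> standard_exps W i"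
      unfolding B_def using VS.span_diff in_span_monoms_iff by blast
    have "normal_form W (f * (x - y)) = 0"
      using Fxy unfolding F_def by (simp add: right_diff_distrib normal_form_diff)
    then have "f * (x - y) \<in> artin_ideal W" using normal_form_eq_0_iff[of W, OF irr] by blast
    moreover have "x - y \<in> homog i" using keys by (auto simp: homog_def standard_exps_def)
    ultimately have "normal_form W (x - y) = 0"
      using inj normal_form_eq_0_iff[of W, OF irr] unfolding artin_mult_injective_def by blast
    moreover have "normal_form W (x - y) = x - y"
      using keys by (intro normal_form_eq_self) (auto simp: standard_exps_def)
    ultimately show "x = y" by simp
  qed
  have indep: "VS.independent (F ` B)"
    by (rule vector_space_pair.linear_independent_injective_image[OF _ linF _ injF])
       (simp_all add: vector_space_pair_def vector_space_pscale B_def independent_monoms)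
  have "card (F ` B) = card (standard_exps W i)"
    using card_image[OF inj_on_subset[OF injF VS.span_superset]]
      card_image[OF inj_on_subset[OF monom_inj subset_UNIV]]
    unfolding B_def by simp
  moreover have "F ` B \<subseteq> nf_mult_image W f i"
    by (auto simp: F_def B_def nf_mult_image_def standard_exps_def monom_in_homog)
  ultimately show ?thesis
    using independent_card_le_dim_of_finite_span[OF finite_imageI[OF finite_standard_exps]
        nf_mult_image_subset_span[OF hom] indep] VS.span_superset
    by (metis subset_trans)
qed

lemma artin_mult_rank_eq_min_iff:
  fixes f :: "('v::finite, 'k::field) mpoly" and K :: "'k itself"
  assumes irr: "\<And>u. \<not> W u u" and hom: "(\<lambda>p. f * p) ` homog i \<subseteq> homog (Suc i)"
  shows "artin_mult_rank W f i = min (artin_dim W i K) (artin_dim W (Suc i) K)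
    \<longleftrightarrow> card (standard_exps W i) \<le> VS.dim (nf_mult_image W f i)
        \<or> card (standard_exps W (Suc i)) \<le> VS.dim (nf_mult_image W f i)"
proof -
  have "artin_dim W i K = card (standard_exps W i)" "artin_dim W (Suc i) K = card (standard_exps W (Suc i))"
    by (rule artin_dim_eq_card[of W, OF irr])+
  moreover have "VS.dim (nf_mult_image W f i) \<le> card (standard_exps W i)"
    by (rule dim_nf_mult_image_le[of W, OF irr])
  moreover have "VS.dim (nf_mult_image W f i) \<le> card (standard_exps W (Suc i))"
    by (rule dim_nf_mult_image_le_Suc[OF hom])
  moreover have "artin_mult_rank W f i = VS.dim (nf_mult_image W f i)"
    by (rule artin_mult_rank_eq_dim[where W = W, OF irr hom])
  ultimately show ?thesis by linarith
qed

lemma artin_mult_rank_eq_min_if_injective: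
  fixes f :: "('v::finite, 'k::field) mpoly" and K :: "'k itself"
  assumes irr: "\<And>u. \<not> W u u" and hom: "(\<lambda>p. f * p) ` homog i \<subseteq> homog (Suc i)"
    and inj: "artin_mult_injective W f i"
  shows "artin_mult_rank W f i = min (artin_dim W i K) (artin_dim W (Suc i) K)"
  using artin_mult_rank_eq_min_iff[where W = W, OF irr hom]
    card_le_dim_nf_mult_image_if_injective[where W = W, OF irr hom inj]
  by blast

lemma artin_mult_rank_eq_min_if_spanning:
  fixes f :: "('v::finite, 'k::field) mpoly" and K :: "'k itself"
  assumes irr: "\<And>u. \<not> W u u" and hom: "(\<lambda>p. f * p) ` homog i \<subseteq> homog (Suc i)"
    and span: "monom ` standard_exps W (Suc i) \<subseteq> VS.span (nf_mult_image W f i)"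
  shows "artin_mult_rank W f i = min (artin_dim W i K) (artin_dim W (Suc i) K)"
proof -
  have "card (monom ` standard_exps W (Suc i) :: ('v, 'k) mpoly set) \<le> VS.dim (nf_mult_image W f i)"
    by (rule independent_card_le_dim_of_finite_span[OF finite_imageI[OF finite_standard_exps]
          nf_mult_image_subset_span[OF hom] independent_monoms span])
  then have "card (standard_exps W (Suc i)) \<le> VS.dim (nf_mult_image W f i)"
    by (simp add: card_image[OF inj_on_subset[OF monom_inj subset_UNIV]])
  then show ?thesis using artin_mult_rank_eq_min_iff[where W = W, OF irr hom] by blast
qed

section \<open>Whiskered graphs\<close>

lemma lookup_sum_vars_mult_set_exp:
  fixes p :: "('v::finite, 'k::comm_ring_1) mpoly"
  shows "Poly_Mapping.lookup (sum_vars * p) (set_exp T) = up_op (\<lambda>S. Poly_Mapping.lookup p (set_exp S)) T"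
proof -
  have "Poly_Mapping.lookup (sum_vars * p) (set_exp T)
      = (\<Sum>v\<in>UNIV. if v \<in> T then Poly_Mapping.lookup p (set_exp (T - {v})) else 0)"
    unfolding sum_distrib_right lookup_sum
    by (intro sum.cong refl) (simp add: lookup_var_mult lookup_set_exp set_exp_minus_unit_exp)
  then show ?thesis by (simp add: up_op_def sum.If_cases)
qed

lemma whisker_irrefl: "(\<And>u. \<not> E u u) \<Longrightarrow> \<not> whisker E v v"
  by (cases v) auto

lemma whisker_indep_Inl_Un_Inr:
  assumes X: "indep (whisker E) (Inl ` X)" and XY: "X \<inter> Y = {}"
  shows "indep (whisker E) (Inl ` X \<union> Inr ` Y)"
  unfolding indep_def
proof (intro ballI)
  fix u v assume "u \<in> Inl ` X \<union> Inr ` Y" "v \<in> Inl ` X \<union> Inr ` Y"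
  then show "\<not> whisker E u v" using X XY unfolding indep_def by (cases u; cases v) auto
qed

lemma up_op_Inl_Un_Inr:
  fixes f :: "('a + 'b) set \<Rightarrow> 'k::comm_ring_1"
  assumes "finite X" "finite Y"
  shows "up_op f (Inl ` X \<union> Inr ` Y)
    = (\<Sum>a\<in>X. f (Inl ` (X - {a}) \<union> Inr ` Y)) + up_op (\<lambda>U. f (Inl ` X \<union> Inr ` U)) Y"
proof -
  have "up_op f (Inl ` X \<union> Inr ` Y)
      = (\<Sum>v\<in>Inl ` X. f (Inl ` X \<union> Inr ` Y - {v})) + (\<Sum>v\<in>Inr ` Y. f (Inl ` X \<union> Inr ` Y - {v}))"
    unfolding up_op_def using assms by (intro sum.union_disjoint) auto
  also have "(\<Sum>v\<in>Inl ` X. f (Inl ` X \<union> Inr ` Y - {v})) = (\<Sum>a\<in>X. f (Inl ` (X - {a}) \<union> Inr ` Y))"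
    by (subst sum.reindex) (auto intro!: sum.cong arg_cong[where f = f])
  also have "(\<Sum>v\<in>Inr ` Y. f (Inl ` X \<union> Inr ` Y - {v})) = up_op (\<lambda>U. f (Inl ` X \<union> Inr ` U)) Y"
    unfolding up_op_def by (subst sum.reindex) (auto intro!: sum.cong arg_cong[where f = f])
  finally show ?thesis .
qed

text \<open>The sets \<open>Inl ` X \<union> Inr ` T\<close> with \<open>T \<subseteq> -X\<close> are independent, and on them the up operator
  of \<open>f\<close> is that of the Boolean lattice of \<open>-X\<close>: the terms removing an element of \<open>X\<close> vanish by
  hypothesis. That operator is injective since \<open>2(i - |X|) < n - |X|\<close>.\<close>
lemma whisker_up_op_slice_eq_0:
  fixes f :: "('a::finite + 'a) set \<Rightarrow> 'k::field_char_0"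
  assumes supp: "\<And>S. f S \<noteq> 0 \<Longrightarrow> card S = i"
    and up: "\<And>T. indep (whisker E) T \<Longrightarrow> up_op f T = 0"
    and small: "2 * i < card (UNIV :: 'a set)"
    and indX: "indep (whisker E) (Inl ` X)"
    and smaller: "\<And>a T. a \<in> X \<Longrightarrow> T \<inter> X = {} \<Longrightarrow> f (Inl ` (X - {a}) \<union> Inr ` T) = 0"
    and Y: "Y \<inter> X = {}"
  shows "f (Inl ` X \<union> Inr ` Y) = 0"
proof (rule ccontr)
  assume nz: "f (Inl ` X \<union> Inr ` Y) \<noteq> 0"
  have card_Inl_Un_Inr: "card (Inl ` X \<union> Inr ` T) = card X + card T" for T :: "'a set"
    by (subst card_Un_disjoint) (auto simp: card_image)
  define g where "g T = (if T \<subseteq> - X then f (Inl ` X \<union> Inr ` T) else 0)" for T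
  have "g Y = 0"
  proof (rule up_op_injective_below_middle[of "- X" "i - card X" g])
    have "card X \<le> i" using supp[OF nz] card_Inl_Un_Inr by simp
    moreover have "card (- X) = card (UNIV :: 'a set) - card X"
      by (simp add: Compl_eq_Diff_UNIV card_Diff_subset)
    ultimately show "2 * (i - card X) < card (- X)" using small by linarith
    show "\<forall>T. g T \<noteq> 0 \<longrightarrow> T \<subseteq> - X \<and> card T = i - card X"
      using supp card_Inl_Un_Inr by (fastforce simp: g_def split: if_splits)
    show "\<forall>T. T \<subseteq> - X \<longrightarrow> up_op g T = 0"
    proof (intro allI impI)
      fix T assume T: "T \<subseteq> - X"
      have "indep (whisker E) (Inl ` X \<union> Inr ` T)"
        using whisker_indep_Inl_Un_Inr[OF indX] T by blast
      then have "up_op f (Inl ` X \<union> Inr ` T) = 0" by (rule up)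
      moreover have "(\<Sum>a\<in>X. f (Inl ` (X - {a}) \<union> Inr ` T)) = 0"
        using smaller T by (intro sum.neutral) blast
      moreover have "up_op (\<lambda>U. f (Inl ` X \<union> Inr ` U)) T = up_op g T"
        unfolding up_op_def g_def using T by (intro sum.cong) auto
      ultimately show "up_op g T = 0" using up_op_Inl_Un_Inr[of X T f] by simp
    qed
  qed simp
  moreover have "Y \<subseteq> - X" using Y by blast
  ultimately show False using nz unfolding g_def by simp
qed

lemma whisker_up_op_injective:
  fixes f :: "('a::finite + 'a) set \<Rightarrow> 'k::field_char_0"
  assumes supp: "\<And>S. f S \<noteq> 0 \<Longrightarrow> card S = i"
    and up: "\<And>T. indep (whisker E) T \<Longrightarrow> up_op f T = 0"
    and small: "2 * i < card (UNIV :: 'a set)"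
    and S: "indep (whisker E) S"
  shows "f S = 0"
proof (rule ccontr)
  assume "f S \<noteq> 0"
  then obtain S0 where S0: "indep (whisker E) S0 \<and> f S0 \<noteq> 0"
    and min: "\<And>S'. indep (whisker E) S' \<and> f S' \<noteq> 0 \<Longrightarrow> card (Inl -` S0) \<le> card (Inl -` S')"
    using ex_has_least_nat[of "\<lambda>S. indep (whisker E) S \<and> f S \<noteq> 0" S "\<lambda>S. card (Inl -` S)"] S by blast
  define X where "X = Inl -` S0"
  define Y where "Y = Inr -` S0"
  have S0_eq: "S0 = Inl ` X \<union> Inr ` Y"
  proof
    show "S0 \<subseteq> Inl ` X \<union> Inr ` Y"
    proof
      fix x assume "x \<in> S0" then show "x \<in> Inl ` X \<union> Inr ` Y" unfolding X_def Y_def by (cases x) auto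
    qed
  qed (auto simp: X_def Y_def)
  have Y: "Y \<inter> X = {}"
    using S0 unfolding X_def Y_def indep_def by (metis disjoint_iff vimageE whisker.simps(2))
  have indX: "indep (whisker E) (Inl ` X)" using S0 S0_eq unfolding indep_def by blast
  have smaller: "f (Inl ` (X - {a}) \<union> Inr ` T) = 0" if a: "a \<in> X" and T: "T \<inter> X = {}" for a T
  proof (rule ccontr)
    assume "f (Inl ` (X - {a}) \<union> Inr ` T) \<noteq> 0"
    moreover have "indep (whisker E) (Inl ` (X - {a}) \<union> Inr ` T)"
      using whisker_indep_Inl_Un_Inr[of E "X - {a}" T] indX T unfolding indep_def by blast
    ultimately have "card X \<le> card (Inl -` (Inl ` (X - {a}) \<union> Inr ` T))"
      using min[folded X_def] by blast
    also have "Inl -` (Inl ` (X - {a}) \<union> Inr ` T) = X - {a}" by auto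
    finally show False using a by (metis card_Diff1_less finite leD)
  qed
  have "f S0 = 0"
    unfolding S0_eq by (rule whisker_up_op_slice_eq_0[OF supp up small indX smaller Y])
  then show False using S0 by simp
qed

lemma whisker_artin_mult_injective:
  fixes E :: "'a::finite \<Rightarrow> 'a \<Rightarrow> bool"
  assumes irr: "\<And>u. \<not> E u u" and small: "2 * i < card (UNIV :: 'a set)"
  shows "artin_mult_injective (whisker E) (sum_vars :: ('a + 'a, 'k::field_char_0) mpoly) i"
  unfolding artin_mult_injective_def
proof (intro ballI impI)
  fix p :: "('a + 'a, 'k) mpoly"
  assume p: "p \<in> homog i" and Lp: "sum_vars * p \<in> artin_ideal (whisker E)"
  have irrW: "\<And>u. \<not> whisker E u u" using whisker_irrefl[of E, OF irr] by blast
  define f where "f = (\<lambda>S. Poly_Mapping.lookup p (set_exp S))"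
  have supp: "card S = i" if "f S \<noteq> 0" for S
  proof -
    have "set_exp S \<in> Poly_Mapping.keys p" using that by (simp add: f_def in_keys_iff)
    then have "mdeg (set_exp S) = i" using p unfolding homog_def by blast
    then show ?thesis by (simp add: mdeg_set_exp)
  qed
  have up: "up_op f T = 0" if T: "indep (whisker E) T" for T
  proof -
    have "\<not> divisible_by_gen (whisker E) (set_exp T)"
      using T divisible_by_gen_iff[of "whisker E", OF irrW] by (simp add: standard_exp_set_exp)
    then have "set_exp T \<notin> Poly_Mapping.keys (sum_vars * p)" using Lp artin_ideal_iff by blast
    then show ?thesis by (simp add: f_def in_keys_iff lookup_sum_vars_mult_set_exp)
  qed
  have "\<not> standard_exp (whisker E) m" if "m \<in> Poly_Mapping.keys p" for m
  proof
    assume "standard_exp (whisker E) m"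
    then obtain S where "indep (whisker E) S" "m = set_exp S" unfolding standard_exp_def by blast
    moreover have "f S = 0" if "indep (whisker E) S" for S
      using whisker_up_op_injective[of f i E S] supp up small that by blast
    ultimately show False using \<open>m \<in> Poly_Mapping.keys p\<close> by (simp add: f_def in_keys_iff)
  qed
  then show "p \<in> artin_ideal (whisker E)"
    by (simp add: artin_ideal_iff divisible_by_gen_iff[of "whisker E", OF irrW])
qed

lemma whisker_indep_transversal:
  fixes E :: "'a::finite \<Rightarrow> 'a \<Rightarrow> bool"
  assumes indT: "indep (whisker E) T" and cardT: "card T = card (UNIV :: 'a set)"
  shows "Inl c \<in> T \<or> Inr c \<in> T"
proof -
  have inj: "inj_on (case_sum id id) T"
  proof (rule inj_onI, rule ccontr)
    fix u v assume "u \<in> T" "v \<in> T" "case_sum id id u = case_sum id id v" "u \<noteq> v"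
    then show False using indT unfolding indep_def by (cases u; cases v) force+
  qed
  have "case_sum id id ` T = UNIV"
    by (rule card_subset_eq) (use card_image[OF inj] cardT in auto)
  then obtain w where "w \<in> T" "case_sum id id w = c" by (metis UNIV_I imageE)
  then show ?thesis by (cases w) auto
qed

text \<open>Modulo the ideal, \<open>\<ell>\<close> times the monomial of \<open>T - {y\<^sub>j}\<close> only keeps the monomials of
  \<open>T\<close> and of \<open>T - {y\<^sub>j} \<union> {x\<^sub>j}\<close>: every other variable is, or is adjacent to, a vertex of \<open>T - {y\<^sub>j}\<close>.\<close>
lemma whisker_nf_sum_vars_mult_transversal:
  fixes E :: "'a::finite \<Rightarrow> 'a \<Rightarrow> bool"
  assumes indT: "indep (whisker E) T" and cardT: "card T = card (UNIV :: 'a set)" and jT: "Inr j \<in> T"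
  defines "S \<equiv> T - {Inr j}"
  shows "normal_form (whisker E) (sum_vars * monom (set_exp S))
    = (monom (set_exp T) :: ('a + 'a, 'k::comm_ring_1) mpoly)
      + normal_form (whisker E) (monom (set_exp (insert (Inl j) S)))"
proof -
  let ?W = "whisker E"
  have trans: "Inl c \<in> T \<or> Inr c \<in> T" for c by (rule whisker_indep_transversal[OF indT cardT])
  have "Inl j \<notin> T" using jT indT unfolding indep_def by (metis whisker.simps(2))
  then have TS: "T = insert (Inr j) S" "Inr j \<notin> S" "Inl j \<notin> S" using jT unfolding S_def by auto
  have ins: "unit_exp v + set_exp S = set_exp (insert v S)" if "v \<notin> S" for v
    using that by (simp add: set_exp_insert)
  have vanish: "normal_form ?W (monom (unit_exp v + set_exp S) :: ('a + 'a, 'k) mpoly) = 0"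
    if v: "v \<notin> {Inr j, Inl j}" for v
  proof -
    have "\<not> standard_exp ?W (unit_exp v + set_exp S)"
    proof (cases "v \<in> S")
      case True
      then have "Poly_Mapping.lookup (unit_exp v + set_exp S) v = 2"
        by (simp add: lookup_add lookup_unit_exp lookup_set_exp)
      then show ?thesis using standard_exp_lookup_le_1[of ?W "unit_exp v + set_exp S" v] by auto
    next
      case False
      obtain w where w: "w \<in> S" "?W v w"
        using trans[of "case_sum id id v"] v False TS by (cases v) auto
      then have "\<not> indep ?W (insert v S)" unfolding indep_def by blast
      then show ?thesis using False by (simp add: ins standard_exp_set_exp)
    qed
    then show ?thesis by (simp add: normal_form_monom)
  qed
  have "normal_form ?W (sum_vars * monom (set_exp S))
      = (\<Sum>v\<in>UNIV. normal_form ?W (monom (unit_exp v + set_exp S) :: ('a + 'a, 'k) mpoly))"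
    by (simp add: sum_distrib_right normal_form_sum var_eq_monom monom_mult)
  also have "\<dots> = (\<Sum>v\<in>{Inr j, Inl j}. normal_form ?W (monom (unit_exp v + set_exp S)))"
    by (rule sum.mono_neutral_right) (use vanish in auto)
  also have "\<dots> = monom (set_exp T) + normal_form ?W (monom (set_exp (insert (Inl j) S)))"
    using TS indT by (simp add: normal_form_monom ins standard_exp_set_exp)
  finally show ?thesis .
qed

text \<open>Induction on the number of \<open>y\<close>-variables in \<open>T\<close>; an edge of \<open>H\<close> guarantees \<open>y\<^sub>j \<in> T\<close> for
  some \<open>j\<close>, and replacing \<open>y\<^sub>j\<close> by \<open>x\<^sub>j\<close> gives a set with fewer \<open>y\<close>'s.\<close>
lemma whisker_transversal_in_span:
  fixes E :: "'a::finite \<Rightarrow> 'a \<Rightarrow> bool"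
  assumes edge: "E a b"
  shows "indep (whisker E) T \<Longrightarrow> card T = card (UNIV :: 'a set) \<Longrightarrow>
    (monom (set_exp T) :: ('a + 'a, 'k::field) mpoly)
      \<in> VS.span (nf_mult_image (whisker E) sum_vars (card (UNIV :: 'a set) - 1))"
proof (induction "card (Inr -` T)" arbitrary: T rule: less_induct)
  case (less T)
  let ?W = "whisker E"
  let ?n = "card (UNIV :: 'a set)"
  let ?V = "VS.span (nf_mult_image ?W sum_vars (?n - 1)) :: ('a + 'a, 'k) mpoly set"
  have indT: "indep ?W T" and cardT: "card T = ?n" using less.prems by auto
  obtain j where jT: "Inr j \<in> T"
    using whisker_indep_transversal[OF indT cardT, of a] whisker_indep_transversal[OF indT cardT, of b]
      edge indT unfolding indep_def by (metis whisker.simps(1))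
  define S where "S = T - {Inr j}"
  have "Inl j \<notin> T" using jT indT unfolding indep_def by (metis whisker.simps(2))
  then have TS: "T = insert (Inr j) S" "Inr j \<notin> S" "Inl j \<notin> S" using jT unfolding S_def by auto
  have cardS: "card S = ?n - 1" using cardT TS by simp
  have "normal_form ?W (sum_vars * monom (set_exp S)) \<in> ?V"
    using cardS by (intro VS.span_base) (auto simp: nf_mult_image_def monom_in_homog mdeg_set_exp)
  moreover have "normal_form ?W (monom (set_exp (insert (Inl j) S))) \<in> ?V"
  proof (cases "indep ?W (insert (Inl j) S)")
    case True
    have "card (insert (Inl j) S) = ?n" using TS cardS cardT by (simp add: card_insert_disjoint)
    moreover have "card (Inr -` insert (Inl j) S) < card (Inr -` T)"
      using jT TS by (auto intro!: psubset_card_mono)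
    ultimately have "monom (set_exp (insert (Inl j) S)) \<in> ?V" using less.hyps True by blast
    then show ?thesis using True by (simp add: normal_form_monom standard_exp_set_exp)
  next
    case False
    then show ?thesis by (simp add: normal_form_monom standard_exp_set_exp VS.span_zero)
  qed
  moreover have "(monom (set_exp T) :: ('a + 'a, 'k) mpoly) = normal_form ?W (sum_vars * monom (set_exp S))
      - normal_form ?W (monom (set_exp (insert (Inl j) S)))"
    using whisker_nf_sum_vars_mult_transversal[OF indT cardT jT, where 'k = 'k, folded S_def] by simp
  ultimately show ?case using VS.span_diff by metis
qed

lemma whisker_top_degree_spanned:
  fixes E :: "'a::finite \<Rightarrow> 'a \<Rightarrow> bool"
  assumes edge: "E a b"
  shows "monom ` standard_exps (whisker E) (card (UNIV :: 'a set))
    \<subseteq> VS.span (nf_mult_image (whisker E) (sum_vars :: ('a + 'a, 'k::field) mpoly) (card (UNIV :: 'a set) - 1))"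
  using whisker_transversal_in_span[where E = E, OF edge]
  by (auto simp: standard_exps_def standard_exp_def mdeg_set_exp)

lemma whisker_has_edge:
  fixes E :: "'a::finite \<Rightarrow> 'a \<Rightarrow> bool"
  assumes "card (UNIV :: 'a set) < card (edges (whisker E))"
  obtains a b where "E a b"
proof -
  have "\<exists>a b. E a b"
  proof (rule ccontr)
  assume "\<nexists>a b. E a b"
  then have "edges (whisker E) \<subseteq> (\<lambda>a. {Inl a, Inr a}) ` UNIV"
    unfolding edges_def by (auto elim!: whisker.elims)
  then have "card (edges (whisker E)) \<le> card ((\<lambda>a. {Inl a, Inr a :: 'a + 'a}) ` UNIV)"
    by (intro card_mono) auto
  also have "\<dots> \<le> card (UNIV :: 'a set)" by (rule card_image_le) simp
  finally show False using assms by simp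
  qed
  then show thesis using that by blast
qed

theorem corollary3p2:
  fixes E :: "'a::finite \<Rightarrow> 'a \<Rightarrow> bool"
    and K :: "'k::field_char_0 itself"
  assumes sym: "\<And>u v. E u v \<Longrightarrow> E v u"
    and irrefl: "\<And>u. \<not> E u u"
    and edges: "card (edges (whisker E)) \<ge> card (UNIV :: 'a set) + 1"
  defines "ell \<equiv> (\<Sum>v\<in>(UNIV :: ('a + 'a) set). var v) :: ('a + 'a, 'k) mpoly"
  shows "(\<forall>i. (2 * i < card (UNIV :: 'a set) \<or> i = card (UNIV :: 'a set) - 1) \<longrightarrow>
            artin_mult_rank (whisker E) ell i
              = min (artin_dim (whisker E) i K) (artin_dim (whisker E) (Suc i) K))
       \<and> (\<forall>i. 2 * i < card (UNIV :: 'a set) \<longrightarrow> artin_mult_injective (whisker E) ell i)"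
proof -
  let ?n = "card (UNIV :: 'a set)"
  have irrW: "\<And>u. \<not> whisker E u u" using whisker_irrefl[of E, OF irrefl] by blast
  have hom: "\<And>i. (\<lambda>p. ell * p) ` homog i \<subseteq> homog (Suc i)"
    unfolding ell_def by (rule sum_vars_mult_homog)
  have inj: "artin_mult_injective (whisker E) ell i" if "2 * i < ?n" for i
    unfolding ell_def using whisker_artin_mult_injective[of E, OF irrefl that] .
  obtain a b where "E a b" by (rule whisker_has_edge[of E]) (use edges in simp)
  then have top: "monom ` standard_exps (whisker E) (Suc (?n - 1))
      \<subseteq> VS.span (nf_mult_image (whisker E) ell (?n - 1))"
    unfolding ell_def using whisker_top_degree_spanned[of E a b] by (simp add: card_gt_0_iff)
  have "artin_mult_rank (whisker E) ell i = min (artin_dim (whisker E) i K) (artin_dim (whisker E) (Suc i) K)"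
    if "2 * i < ?n \<or> i = ?n - 1" for i
    using that artin_mult_rank_eq_min_if_injective[of "whisker E", OF irrW hom inj]
      artin_mult_rank_eq_min_if_spanning[of "whisker E", OF irrW hom top] by blast
  then show ?thesis using inj by blast
qed

end
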